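(* Let $P\subseteq\mathbb{R}^n$ be an $n$-dimensional rational polytope, let $\pi:\mathbb{R}^n\to\mathbb{R}^k$ be a surjective linear map with $\pi(\mathbb{Z}^n)=\mathbb{Z}^k$, and let $Q:=\pi(P)$. Assume $P$ is $\alpha$-canonical for some $\alpha>0$. Then $\alpha\, d_P(x)\le d_Q(\pi(x))$ for all $x\in P$.
   Context: For a full-dimensional rational polytope $R\subseteq\mathbb{R}^d$ (lattice $\mathbb{Z}^d$), write $R$ irredundantly as $\{x:\langle a_i,x\rangle\ge b_i\}$ with primitive $a_i\in(\mathbb{Z}^d)^*$, each inequality defining a facet, and set $d_R(x):=\min_i(\langle a_i,x\rangle-b_i)$. For a rational cone $\sigma\subseteq(\mathbb{R}^n)^*$ with primitive ray generators $v_1,\dots,v_m\in(\mathbb{Z}^n)^*$, the height function is $\mathrm{height}_\sigma(y):=\max\{\sum_i\lambda_i:\lambda_i\ge0,\ \sum_i\lambda_iv_i=y\}$ for $y\in\sigma$; $\sigma$ is $\alpha$-canonical if $\mathrm{height}_\sigma(y)\ge\alpha$ for every nonzero $y\in\sigma\cap(\mathbb{Z}^n)^*$. A rational polytope is $\alpha$-canonical if all cones of its (inner) normal fan are $\alpha$-canonical. *)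

theory Defs
  imports "HOL-Analysis.Analysis"
begin

text \<open>Lattice points Z^n (also used for the dual lattice, identifying (R^n)^* with R^n
  via the standard inner product).\<close>
definition lattice_pt :: "real^'n \<Rightarrow> bool" where
  "lattice_pt x \<longleftrightarrow> (\<forall>i. x $ i \<in> \<int>)"

definition rational_pt :: "real^'n \<Rightarrow> bool" where
  "rational_pt x \<longleftrightarrow> (\<forall>i. x $ i \<in> \<rat>)"

definition primitive :: "real^'n \<Rightarrow> bool" where
  "primitive a \<longleftrightarrow> lattice_pt a \<and> a \<noteq> 0 \<and>
     \<not> (\<exists>(m::int) b. m > 1 \<and> lattice_pt b \<and> a = of_int m *\<^sub>R b)"

definition rational_polytope :: "(real^'n) set \<Rightarrow> bool" where
  "rational_polytope P \<longleftrightarrow> (\<exists>S. finite S \<and> (\<forall>x\<in>S. rational_pt x) \<and> P = convex hull S)"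

definition full_dim :: "(real^'n) set \<Rightarrow> bool" where
  "full_dim P \<longleftrightarrow> aff_dim P = int CARD('n)"

definition facet_ineq :: "(real^'n) set \<Rightarrow> real^'n \<Rightarrow> real \<Rightarrow> bool" where
  "facet_ineq R a b \<longleftrightarrow> primitive a \<and> (\<forall>x\<in>R. a \<bullet> x \<ge> b) \<and>
     {x \<in> R. a \<bullet> x = b} facet_of R"

definition lattice_dist :: "(real^'n) set \<Rightarrow> real^'n \<Rightarrow> real" where
  "lattice_dist R x = Min {a \<bullet> x - b | a b. facet_ineq R a b}"

definition ray_gens :: "(real^'n) set \<Rightarrow> (real^'n) set" where
  "ray_gens \<sigma> = {v. primitive v \<and> {t *\<^sub>R v | t. t \<ge> 0} face_of \<sigma>}"

definition height :: "(real^'n) set \<Rightarrow> real^'n \<Rightarrow> real" where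
  "height \<sigma> y = Sup {(\<Sum>v\<in>ray_gens \<sigma>. c v) | c.
       (\<forall>v\<in>ray_gens \<sigma>. c v \<ge> 0) \<and> (\<Sum>v\<in>ray_gens \<sigma>. c v *\<^sub>R v) = y}"

definition alpha_canonical_cone :: "real \<Rightarrow> (real^'n) set \<Rightarrow> bool" where
  "alpha_canonical_cone \<alpha> \<sigma> \<longleftrightarrow>
     (\<forall>y\<in>\<sigma>. lattice_pt y \<and> y \<noteq> 0 \<longrightarrow> height \<sigma> y \<ge> \<alpha>)"

definition normal_cone :: "(real^'n) set \<Rightarrow> (real^'n) set \<Rightarrow> (real^'n) set" where
  "normal_cone P F = {u. \<forall>y\<in>F. \<forall>z\<in>P. u \<bullet> y \<le> u \<bullet> z}"

definition normal_fan :: "(real^'n) set \<Rightarrow> (real^'n) set set" where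
  "normal_fan P = {normal_cone P F | F. F face_of P \<and> F \<noteq> {}}"

definition alpha_canonical_polytope :: "real \<Rightarrow> (real^'n) set \<Rightarrow> bool" where
  "alpha_canonical_polytope \<alpha> P \<longleftrightarrow> (\<forall>\<sigma>\<in>normal_fan P. alpha_canonical_cone \<alpha> \<sigma>)"

end

theory Submission
  imports Defs
begin

text \<open>Write d_Q(\<pi> x) = <a, \<pi> x> - b for a facet inequality of Q = \<pi>(P). Its pullback
  u = adjoint \<pi> a is a nonzero lattice functional attaining its minimum b over P on a face F, so
  u lies in the normal cone \<sigma> of F. Farkas' lemma and Krein--Milman show that \<sigma> is generated
  by its primitive ray generators, and these are primitive facet normals v of P that are tight
  on F. Any representation u = \<Sum> c v * v with c v \<ge> 0 then gives, for y0 in F,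
  <u, x> - b = \<Sum> c v * (<v, x> - <v, y0>) \<ge> (\<Sum> c v) * d_P(x). Taking the supremum over
  representations, height \<sigma> u * d_P(x) \<le> d_Q(\<pi> x), and \<alpha>-canonicity gives
  height \<sigma> u \<ge> \<alpha>.\<close>

section \<open>Lattice and rational vectors\<close>

lemma lattice_pt_imp_rational_pt: "lattice_pt x \<Longrightarrow> rational_pt x"
  unfolding lattice_pt_def rational_pt_def using Ints_subset_Rats by blast

lemma lattice_pt_floor: "lattice_pt x \<Longrightarrow> x $ i = of_int \<lfloor>x $ i\<rfloor>"
  unfolding lattice_pt_def by (metis Ints_cases floor_of_int)

lemma lattice_pt_inner: "lattice_pt x \<Longrightarrow> lattice_pt y \<Longrightarrow> x \<bullet> y \<in> \<int>"
  unfolding lattice_pt_def inner_vec_def by (auto intro!: Ints_mult)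

lemma lattice_pt_axis: "lattice_pt (axis i (1::real))"
  unfolding lattice_pt_def axis_def by auto

lemma rational_pt_0 [simp]: "rational_pt 0"
  unfolding rational_pt_def by auto

lemma rational_pt_add: "rational_pt x \<Longrightarrow> rational_pt y \<Longrightarrow> rational_pt (x + y)"
  unfolding rational_pt_def by (auto intro!: Rats_add)

lemma rational_pt_diff: "rational_pt x \<Longrightarrow> rational_pt y \<Longrightarrow> rational_pt (x - y)"
  unfolding rational_pt_def by (auto intro!: Rats_diff)

lemma rational_pt_scaleR: "c \<in> \<rat> \<Longrightarrow> rational_pt y \<Longrightarrow> rational_pt (c *\<^sub>R y)"
  unfolding rational_pt_def by (auto intro!: Rats_mult)

lemma rational_pt_inner: "rational_pt x \<Longrightarrow> rational_pt y \<Longrightarrow> x \<bullet> y \<in> \<rat>"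
  unfolding rational_pt_def inner_vec_def by (auto intro!: Rats_mult)

lemma rational_pt_axis: "rational_pt (axis i (1::real))"
  by (simp add: lattice_pt_axis lattice_pt_imp_rational_pt)

lemma rational_pt_linear_image:
  fixes f :: "real^'n \<Rightarrow> real^'k"
  assumes "linear f" and lattice: "\<And>i. lattice_pt (f (axis i 1))" and "rational_pt x"
  shows "rational_pt (f x)"
proof -
  have "f x = f (\<Sum>i\<in>UNIV. x $ i *\<^sub>R axis i 1)"
    using basis_expansion[of x] by (simp add: scalar_mult_eq_scaleR)
  also have "\<dots> = (\<Sum>i\<in>UNIV. x $ i *\<^sub>R f (axis i 1))"
    by (simp add: linear_sum[OF \<open>linear f\<close>] linear_scale[OF \<open>linear f\<close>])
  finally have "f x = (\<Sum>i\<in>UNIV. x $ i *\<^sub>R f (axis i 1))" .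
  moreover have "rational_pt (x $ i *\<^sub>R f (axis i 1))" for i
    using \<open>rational_pt x\<close> lattice_pt_imp_rational_pt[OF lattice]
    by (intro rational_pt_scaleR) (auto simp: rational_pt_def)
  ultimately show ?thesis
    unfolding rational_pt_def by auto
qed

lemma lattice_pt_adjoint:
  fixes f :: "real^'n \<Rightarrow> real^'k"
  assumes "linear f" and lattice: "\<And>i. lattice_pt (f (axis i 1))" and "lattice_pt a"
  shows "lattice_pt (adjoint f a)"
  unfolding lattice_pt_def
proof
  fix i
  have "adjoint f a $ i = a \<bullet> f (axis i 1)"
    by (simp add: cart_eq_inner_axis adjoint_works[OF \<open>linear f\<close>] inner_commute)
  then show "adjoint f a $ i \<in> \<int>"
    using lattice_pt_inner[OF \<open>lattice_pt a\<close> lattice] by simp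
qed

lemma rational_pt_lattice_multiple:
  assumes "rational_pt r"
  obtains m :: int where "m > 0" "lattice_pt (of_int m *\<^sub>R r)"
proof -
  have "\<forall>i. \<exists>p q. q > (0::int) \<and> r $ i = of_int p / of_int q"
    using assms unfolding rational_pt_def by (metis Rats_cases')
  then obtain p q where pq: "\<And>i. q i > 0 \<and> r $ i = of_int (p i) / of_int (q i)"
    by metis
  define m where "m = (\<Prod>i\<in>UNIV. q i)"
  have "of_int m * r $ i \<in> \<int>" for i
  proof -
    have "m = q i * (\<Prod>j\<in>UNIV-{i}. q j)"
      unfolding m_def by (simp add: prod.remove)
    then have "of_int m * r $ i = of_int (p i * (\<Prod>j\<in>UNIV-{i}. q j))"
      using pq[of i] by (simp add: field_simps)
    then show ?thesis by (metis Ints_of_int)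
  qed
  moreover have "m > 0" unfolding m_def using pq by (simp add: prod_pos)
  ultimately show ?thesis using that unfolding lattice_pt_def by simp
qed

lemma lattice_pt_primitive_multiple:
  assumes "lattice_pt z" "z \<noteq> 0"
  obtains v t where "primitive v" "t > 0" "z = t *\<^sub>R v"
proof -
  obtain i where i: "z $ i \<noteq> 0" using assms(2) by (metis vec_eq_iff zero_index)
  define K where "K = {k::nat. k \<ge> 1 \<and> lattice_pt ((1 / real k) *\<^sub>R z)}"
  have bound: "k \<le> nat \<lfloor>\<bar>z $ i\<bar>\<rfloor>" if "k \<in> K" for k
  proof -
    have k1: "k \<ge> 1" and "lattice_pt ((1 / real k) *\<^sub>R z)" using that K_def by auto
    then have "((1 / real k) *\<^sub>R z) $ i \<in> \<int>" unfolding lattice_pt_def by blast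
    then have "z $ i / real k \<in> \<int>" by simp
    moreover have "z $ i / real k \<noteq> 0" using i k1 by simp
    ultimately have "\<bar>z $ i / real k\<bar> \<ge> 1" by (metis Ints_nonzero_abs_ge1)
    then have "real k \<le> \<bar>z $ i\<bar>" using k1 by (simp add: field_simps)
    then show ?thesis by linarith
  qed
  have "finite K" by (rule finite_subset[of _ "{..nat \<lfloor>\<bar>z $ i\<bar>\<rfloor>}"]) (use bound in auto)
  moreover have "1 \<in> K" using assms(1) unfolding K_def by simp
  ultimately have kK: "Max K \<in> K" and kmax: "\<And>j. j \<in> K \<Longrightarrow> j \<le> Max K"
    using Max_in Max_ge by blast+
  define k where "k = Max K"
  have k1: "k \<ge> 1" using kK K_def k_def by auto
  define v where "v = (1 / real k) *\<^sub>R z"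
  have z: "z = real k *\<^sub>R v" using k1 v_def by simp
  have "primitive v"
    unfolding primitive_def
  proof (intro conjI notI)
    show "lattice_pt v" using kK K_def v_def k_def by auto
  next
    assume "v = 0"
    then show False using assms(2) z by simp
  next
    assume "\<exists>(m::int) b. m > 1 \<and> lattice_pt b \<and> v = of_int m *\<^sub>R b"
    then obtain m b where m: "m > 1" "lattice_pt b" "v = of_int m *\<^sub>R b" by blast
    have "real (k * nat m) = real k * of_int m" using m by simp
    then have "(1 / real (k * nat m)) *\<^sub>R z = b" using m k1 z by simp
    then have "k * nat m \<in> K" unfolding K_def using m k1 by auto
    then have "k * nat m \<le> k" unfolding k_def by (rule kmax)
    moreover have "nat m \<ge> 2" using m by linarith
    then have "k * 2 \<le> k * nat m" by (rule mult_le_mono2)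
    ultimately show False using k1 by linarith
  qed
  moreover have "real k > 0" using k1 by simp
  ultimately show ?thesis using that z by blast
qed

lemma primitive_common_divisor:
  fixes x :: "real^'n"
  assumes "primitive x" and dvd: "\<And>j. m dvd \<lfloor>x $ j\<rfloor>"
  shows "\<not> m > 1"
proof -
  have "\<forall>j. \<exists>c. \<lfloor>x $ j\<rfloor> = m * c" using dvd by (auto simp: dvd_def)
  then obtain c where c: "\<And>j. \<lfloor>x $ j\<rfloor> = m * c j" by metis
  have "lattice_pt x" using assms(1) by (simp add: primitive_def)
  then have "x $ j = of_int m * of_int (c j)" for j
    by (subst lattice_pt_floor) (simp_all add: c)
  then have "x = of_int m *\<^sub>R (\<chi> j. of_int (c j))" by (simp add: vec_eq_iff)
  moreover have "lattice_pt ((\<chi> j. of_int (c j)) :: real^'n)" unfolding lattice_pt_def by simp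
  ultimately show ?thesis using assms(1) unfolding primitive_def by blast
qed

lemma primitive_positive_multiple:
  fixes v w :: "real^'n"
  assumes pv: "primitive v" and pw: "primitive w" and "t > 0" and wt: "w = t *\<^sub>R v"
  shows "t = 1"
proof -
  have lv: "lattice_pt v" and lw: "lattice_pt w" using pv pw primitive_def by auto
  obtain i where i: "v $ i \<noteq> 0" using pv unfolding primitive_def by (metis vec_eq_iff zero_index)
  have "t = w $ i / v $ i" using wt i by simp
  moreover have "w $ i / v $ i \<in> \<rat>"
    using lv lw Ints_subset_Rats unfolding lattice_pt_def by (meson Rats_divide subsetD)
  ultimately obtain p q :: int where pq: "q > 0" "coprime p q" "t = of_int p / of_int q"
    by (metis Rats_cases')
  have "p > 0" using pq \<open>t > 0\<close> by (simp add: zero_less_divide_iff)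
  define W V where "W j = \<lfloor>w $ j\<rfloor>" and "V j = \<lfloor>v $ j\<rfloor>" for j
  have Wj: "w $ j = of_int (W j)" and Vj: "v $ j = of_int (V j)" for j
    using lw lv lattice_pt_floor unfolding W_def V_def by blast+
  have eq: "q * W j = p * V j" for j
  proof -
    have "of_int q * w $ j = of_int p * v $ j" using wt pq by (simp add: field_simps)
    then have "real_of_int (q * W j) = real_of_int (p * V j)" by (simp add: Wj Vj)
    then show ?thesis by (simp only: of_int_eq_iff)
  qed
  have "p dvd W j" for j
  proof -
    have "p dvd q * W j" using eq by simp
    then show ?thesis using pq(2) by (metis coprime_dvd_mult_right_iff)
  qed
  then have "\<not> p > 1" using primitive_common_divisor[OF pw] by (simp add: W_def)
  then have "p = 1" using \<open>p > 0\<close> by simp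
  have "q dvd V j" for j
  proof -
    have "q dvd p * V j" using eq by (metis dvd_triv_left)
    then show ?thesis using pq(2) by (metis coprime_commute coprime_dvd_mult_right_iff)
  qed
  then have "\<not> q > 1" using primitive_common_divisor[OF pv] by (simp add: V_def)
  then have "q = 1" using \<open>q > 0\<close> by simp
  show ?thesis using \<open>p = 1\<close> \<open>q = 1\<close> pq by simp
qed

section \<open>A rational normal to a rational subspace\<close>

definition proj_list :: "(real^'n) list \<Rightarrow> real^'n \<Rightarrow> real^'n" where
  "proj_list us w = (\<Sum>u\<leftarrow>us. ((w \<bullet> u) / (u \<bullet> u)) *\<^sub>R u)"

fun gram_schmidt :: "(real^'n) list \<Rightarrow> (real^'n) list" where
  "gram_schmidt [] = []"
| "gram_schmidt (w # ws) = (w - proj_list (gram_schmidt ws) w) # gram_schmidt ws"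

lemma proj_list_Nil [simp]: "proj_list [] w = 0"
  by (simp add: proj_list_def)

lemma proj_list_Cons [simp]: "proj_list (u # us) w = ((w \<bullet> u) / (u \<bullet> u)) *\<^sub>R u + proj_list us w"
  by (simp add: proj_list_def)

lemma proj_list_inner_orthogonal: "(\<forall>u\<in>set us. u \<bullet> y = 0) \<Longrightarrow> proj_list us w \<bullet> y = 0"
  by (induction us) (auto simp: inner_add_left)

lemma proj_list_inner:
  assumes "sorted_wrt (\<lambda>x y. x \<bullet> y = 0) us" "u \<in> set us"
  shows "proj_list us w \<bullet> u = w \<bullet> u"
  using assms
proof (induction us)
  case (Cons x xs)
  show ?case
  proof (cases "u = x")
    case True
    have "proj_list xs w \<bullet> u = 0"
      using Cons.prems True by (intro proj_list_inner_orthogonal) (auto simp: inner_commute)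
    then show ?thesis using True by (simp add: inner_add_left)
  next
    case False
    then show ?thesis using Cons by (auto simp: inner_add_left)
  qed
qed simp

lemma gram_schmidt_orthogonal: "sorted_wrt (\<lambda>x y. x \<bullet> y = 0) (gram_schmidt ws)"
  by (induction ws) (auto simp: inner_diff_left proj_list_inner)

lemma rational_pt_proj_list:
  "(\<And>u. u \<in> set us \<Longrightarrow> rational_pt u) \<Longrightarrow> rational_pt w \<Longrightarrow> rational_pt (proj_list us w)"
  by (induction us) (auto intro!: rational_pt_add rational_pt_scaleR Rats_divide rational_pt_inner)

lemma rational_pt_gram_schmidt:
  "(\<And>u. u \<in> set ws \<Longrightarrow> rational_pt u) \<Longrightarrow> u \<in> set (gram_schmidt ws) \<Longrightarrow> rational_pt u"
  by (induction ws arbitrary: u) (auto intro!: rational_pt_diff rational_pt_proj_list)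

lemma proj_list_in_span: "proj_list us w \<in> span (set us)"
proof (induction us)
  case (Cons u us)
  have "proj_list us w \<in> span (set (u # us))"
    using Cons.IH span_mono[of "set us" "set (u # us)"] by auto
  then show ?case by (simp add: span_add span_mul span_base)
qed (simp add: span_zero)

lemma span_gram_schmidt: "span (set (gram_schmidt ws)) = span (set ws)"
proof (induction ws)
  case (Cons w ws)
  have "span (set (gram_schmidt (w # ws))) = span (insert w (set (gram_schmidt ws)))"
    by (simp add: eq_span_insert_eq span_neg proj_list_in_span)
  also have "\<dots> = span (insert w (set ws))"
    unfolding span_insert Cons.IH ..
  finally show ?case by simp
qed simp

text \<open>Gram--Schmidt preserves rationality, so the component of a standard basis vector
  orthogonal to a proper rational subspace is a rational normal of that subspace.\<close>

lemma rational_orthogonal_vector: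
  fixes D :: "(real^'n) set"
  assumes "finite D" and rat: "\<And>d. d \<in> D \<Longrightarrow> rational_pt d" and "span D \<noteq> UNIV"
  obtains r where "rational_pt r" "r \<noteq> 0" "\<And>d. d \<in> D \<Longrightarrow> r \<bullet> d = 0"
proof -
  obtain ws where ws: "set ws = D" using assms(1) finite_list by blast
  define us where "us = gram_schmidt ws"
  have span_us: "span (set us) = span D" unfolding us_def span_gram_schmidt ws ..
  obtain i where i: "axis i (1::real) \<notin> span D"
  proof (rule ccontr)
    assume "\<not> thesis"
    then have "(Basis :: (real^'n) set) \<subseteq> span D" using that by (auto simp: Basis_vec_def)
    then have "span (Basis :: (real^'n) set) \<subseteq> span D" by (metis span_mono span_span)
    then show False using assms(3) by (simp add: top.extremum_unique)
  qed
  define r where "r = axis i 1 - proj_list us (axis i 1)"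
  have "orthogonal r u" if "u \<in> set us" for u
    using proj_list_inner[OF gram_schmidt_orthogonal that[unfolded us_def]] that
    by (simp add: orthogonal_def r_def inner_diff_left us_def)
  then have "orthogonal r d" if "d \<in> D" for d
    using that span_us span_base orthogonal_to_span by blast
  then have "r \<bullet> d = 0" if "d \<in> D" for d
    using that unfolding orthogonal_def by blast
  moreover have "r \<noteq> 0"
  proof
    assume "r = 0"
    then have "axis i 1 \<in> span (set us)" using proj_list_in_span[of us "axis i 1"] r_def by simp
    then show False using i span_us by simp
  qed
  moreover have "rational_pt r"
    unfolding r_def using rational_pt_gram_schmidt rat ws us_def
    by (auto intro!: rational_pt_diff rational_pt_axis rational_pt_proj_list)
  ultimately show ?thesis using that by blast
qed

section \<open>Facets of full-dimensional rational polytopes\<close>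

lemma rational_polytope_imp_polytope: "rational_polytope P \<Longrightarrow> polytope P"
  unfolding rational_polytope_def polytope_def by blast

lemma orthogonal_complement_imp_parallel:
  fixes a c :: "'a::real_inner"
  assumes "a \<noteq> 0" and "\<And>d. a \<bullet> d = 0 \<Longrightarrow> c \<bullet> d = 0"
  shows "c = ((c \<bullet> a) / (a \<bullet> a)) *\<^sub>R a"
proof -
  define e where "e = c - ((c \<bullet> a) / (a \<bullet> a)) *\<^sub>R a"
  have "a \<bullet> e = 0" using assms(1) unfolding e_def by (simp add: inner_diff_right inner_commute)
  then have "c \<bullet> e = 0" using assms(2) by blast
  with \<open>a \<bullet> e = 0\<close> have "e \<bullet> e = 0" unfolding e_def by (simp add: inner_diff_left)
  then show ?thesis unfolding e_def by simp
qed

lemma affine_hull_facet_eq_hyperplane: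
  fixes P :: "(real^'n) set"
  assumes "aff_dim P = int CARD('n)" and G: "G facet_of P" and "a \<noteq> 0"
    and "G \<subseteq> {x. a \<bullet> x = b}"
  shows "affine hull G = {x. a \<bullet> x = b}"
proof (rule affine_dim_equal)
  show "affine hull G \<noteq> {}" using G by (simp add: facet_of_def)
  show "affine hull G \<subseteq> {x. a \<bullet> x = b}" using assms(4) by (intro hull_minimal affine_hyperplane)
  show "aff_dim (affine hull G) = aff_dim {x. a \<bullet> x = b}"
    using G assms(1,3) by (simp add: facet_of_def)
qed (simp_all add: affine_hyperplane)

text \<open>Both hyperplanes equal the affine hull of the facet; a point of P off that hyperplane fixes
  the sign of the factor.\<close>

lemma facet_supporting_ineqs_proportional:
  fixes P :: "(real^'n) set"
  assumes fd: "aff_dim P = int CARD('n)" and G: "G facet_of P"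
    and "a \<noteq> 0" "a' \<noteq> 0"
    and valid: "\<And>x. x \<in> P \<Longrightarrow> a \<bullet> x \<ge> b" and valid': "\<And>x. x \<in> P \<Longrightarrow> a' \<bullet> x \<ge> b'"
    and Ga: "G = P \<inter> {x. a \<bullet> x = b}" and Ga': "G = P \<inter> {x. a' \<bullet> x = b'}"
  obtains l where "l > 0" "a' = l *\<^sub>R a" "b' = l * b"
proof -
  have H: "affine hull G = {x. a \<bullet> x = b}" and H': "affine hull G = {x. a' \<bullet> x = b'}"
    using affine_hull_facet_eq_hyperplane[OF fd G] assms(3,4) Ga Ga' by blast+
  obtain x0 where x0: "x0 \<in> G" using G by (auto simp: facet_of_def)
  have ax0: "a \<bullet> x0 = b" and a'x0: "a' \<bullet> x0 = b'" using x0 Ga Ga' by auto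
  have "a' \<bullet> d = 0" if "a \<bullet> d = 0" for d
  proof -
    have "x0 + d \<in> affine hull G" using H ax0 that by (simp add: inner_add_right)
    then show ?thesis using H' a'x0 by (simp add: inner_add_right)
  qed
  then have "a' = ((a' \<bullet> a) / (a \<bullet> a)) *\<^sub>R a" by (rule orthogonal_complement_imp_parallel[OF assms(3)])
  then obtain l where a': "a' = l *\<^sub>R a" by blast
  then have b': "b' = l * b" using a'x0 ax0 by simp
  obtain p where p: "p \<in> P" "a \<bullet> p \<noteq> b"
  proof (rule ccontr)
    assume "\<not> thesis"
    then have "aff_dim P \<le> aff_dim {x. a \<bullet> x = b}" using that by (intro aff_dim_subset) auto
    then show False using fd assms(3) by simp
  qed
  then have "a \<bullet> p - b > 0" using valid by force
  moreover have "l * (a \<bullet> p - b) \<ge> 0" using valid'[OF p(1)] a' b' by (simp add: right_diff_distrib)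
  ultimately have "l \<ge> 0" by (simp add: zero_le_mult_iff)
  moreover have "l \<noteq> 0" using a' assms(4) by auto
  ultimately have "l > 0" by simp
  then show ?thesis using a' b' by (rule that)
qed

lemma facet_ineq_facet_of: "facet_ineq P a b \<Longrightarrow> (P \<inter> {x. a \<bullet> x = b}) facet_of P"
  unfolding facet_ineq_def by (simp add: Int_def conj_commute)

lemma facet_ineq_unique:
  fixes P :: "(real^'n) set"
  assumes fd: "aff_dim P = int CARD('n)"
    and f: "facet_ineq P a b" and f': "facet_ineq P a' b'"
    and eq: "P \<inter> {x. a \<bullet> x = b} = P \<inter> {x. a' \<bullet> x = b'}"
  shows "a' = a \<and> b' = b"
proof -
  have pa: "primitive a" and pa': "primitive a'" using f f' facet_ineq_def by auto
  then have "a \<noteq> 0" "a' \<noteq> 0" by (auto simp: primitive_def)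
  moreover have "\<And>x. x \<in> P \<Longrightarrow> a \<bullet> x \<ge> b" "\<And>x. x \<in> P \<Longrightarrow> a' \<bullet> x \<ge> b'"
    using f f' unfolding facet_ineq_def by blast+
  ultimately obtain l where l: "l > 0" "a' = l *\<^sub>R a" "b' = l * b"
    using facet_supporting_ineqs_proportional[OF fd facet_ineq_facet_of[OF f] _ _ _ _ refl eq]
    by blast
  then have "l = 1" using primitive_positive_multiple[OF pa pa'] by blast
  then show ?thesis using l by simp
qed

lemma finite_facet_ineqs:
  fixes P :: "(real^'n) set"
  assumes fd: "aff_dim P = int CARD('n)" and "polytope P"
  shows "finite {(a, b). facet_ineq P a b}"
proof (rule finite_imageD)
  let ?facet = "\<lambda>(a, b). P \<inter> {x. a \<bullet> x = b}"
  have "?facet ` {(a, b). facet_ineq P a b} \<subseteq> {F. F face_of P}"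
    using facet_ineq_facet_of by (auto simp: facet_of_def)
  then show "finite (?facet ` {(a, b). facet_ineq P a b})"
    using finite_polytope_faces[OF \<open>polytope P\<close>] finite_subset by blast
  show "inj_on ?facet {(a, b). facet_ineq P a b}"
  proof (rule inj_onI)
    fix p q assume "p \<in> {(a, b). facet_ineq P a b}" "q \<in> {(a, b). facet_ineq P a b}"
      and "?facet p = ?facet q"
    then show "p = q" using facet_ineq_unique[OF fd] by (cases p, cases q) auto
  qed
qed

lemma rational_multiple_of_facet_normal:
  fixes P :: "(real^'n) set"
  assumes "rational_polytope P" and fd: "aff_dim P = int CARD('n)" and G: "G facet_of P"
    and "a0 \<noteq> 0" and "G \<subseteq> {x. a0 \<bullet> x = b0}"
  obtains l where "l \<noteq> 0" "rational_pt (l *\<^sub>R a0)"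
proof -
  obtain S where S: "finite S" "\<And>x. x \<in> S \<Longrightarrow> rational_pt x" and PS: "P = convex hull S"
    using assms(1) unfolding rational_polytope_def by blast
  have hull_G: "affine hull G = {x. a0 \<bullet> x = b0}"
    using affine_hull_facet_eq_hyperplane[OF fd G \<open>a0 \<noteq> 0\<close>] assms(5) by blast
  obtain S' where S': "S' \<subseteq> S" "G = convex hull S'"
    using face_of_convex_hull_subset[of S G] G PS S(1) finite_imp_compact
    unfolding facet_of_def by blast
  then obtain t0 where t0: "t0 \<in> S'" using G by (auto simp: facet_of_def)
  define D where "D = (\<lambda>x. -t0 + x) ` (S' - {t0})"
  have hull_D: "affine hull G = (\<lambda>x. t0 + x) ` span D"
    unfolding D_def S'(2) affine_hull_convex_hull using affine_hull_span2[OF t0] .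
  have "finite D" unfolding D_def using S' S(1) finite_subset by blast
  moreover have "rational_pt d" if "d \<in> D" for d
    using that t0 S'(1) S(2) unfolding D_def by (auto intro!: rational_pt_diff)
  moreover have "span D \<noteq> UNIV"
  proof
    assume "span D = UNIV"
    then have "affine hull G = UNIV" using hull_D by (metis surj_plus)
    then have "((b0 + 1) / (a0 \<bullet> a0)) *\<^sub>R a0 \<in> {x. a0 \<bullet> x = b0}" using hull_G by blast
    then show False using \<open>a0 \<noteq> 0\<close> by simp
  qed
  ultimately obtain r where r: "rational_pt r" "r \<noteq> 0" "\<And>d. d \<in> D \<Longrightarrow> r \<bullet> d = 0"
    using rational_orthogonal_vector by blast
  have "a0 \<bullet> t0 = b0" using t0 S' hull_G hull_subset[of G affine] hull_subset[of S' convex] by auto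
  have "r \<bullet> d = 0" if "a0 \<bullet> d = 0" for d
  proof -
    have "t0 + d \<in> affine hull G" using hull_G \<open>a0 \<bullet> t0 = b0\<close> that by (simp add: inner_add_right)
    then have "d \<in> span D" using hull_D by auto
    then show ?thesis using r(3) orthogonal_to_span[of d D r] unfolding orthogonal_def by blast
  qed
  then have "r = ((r \<bullet> a0) / (a0 \<bullet> a0)) *\<^sub>R a0"
    by (rule orthogonal_complement_imp_parallel[OF \<open>a0 \<noteq> 0\<close>])
  then show ?thesis using that r(1,2) by (metis scaleR_zero_left)
qed

lemma facet_rational_supporting_ineq:
  fixes P :: "(real^'n) set"
  assumes P: "rational_polytope P" and fd: "aff_dim P = int CARD('n)" and G: "G facet_of P"
  obtains r c where "rational_pt r" "r \<noteq> 0" "\<And>x. x \<in> P \<Longrightarrow> r \<bullet> x \<ge> c"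
    "G = P \<inter> {x. r \<bullet> x = c}"
proof -
  have "G exposed_face_of P"
    using G exposed_face_of_polyhedron polytope_imp_polyhedron rational_polytope_imp_polytope[OF P]
    unfolding facet_of_def by blast
  then obtain a0 b0 where ab0: "P \<subseteq> {x. a0 \<bullet> x \<le> b0}" "G = P \<inter> {x. a0 \<bullet> x = b0}"
    unfolding exposed_face_of_def by blast
  have "a0 \<noteq> 0"
  proof
    assume "a0 = 0"
    then have "G = P" using ab0 G by (auto simp: facet_of_def)
    then show False using G by (simp add: facet_of_def)
  qed
  then obtain l where "l \<noteq> 0" and rat: "rational_pt (l *\<^sub>R a0)"
    using rational_multiple_of_facet_normal[OF P fd G, of a0 b0] ab0(2) by blast
  \<comment> \<open>orient the rational normal inwards\<close>
  define \<mu> where "\<mu> = - \<bar>l\<bar>"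
  have "\<mu> < 0" using \<open>l \<noteq> 0\<close> unfolding \<mu>_def by simp
  have "rational_pt (\<mu> *\<^sub>R a0)"
    using rat rational_pt_scaleR[of "-1" "l *\<^sub>R a0"] unfolding \<mu>_def by (cases "l < 0") auto
  moreover have "\<mu> *\<^sub>R a0 \<bullet> x \<ge> \<mu> * b0" if "x \<in> P" for x
    using ab0(1) that \<open>\<mu> < 0\<close> by (auto simp: mult_le_cancel_left_neg)
  moreover have "G = P \<inter> {x. \<mu> *\<^sub>R a0 \<bullet> x = \<mu> * b0}"
    using ab0(2) \<open>\<mu> < 0\<close> by auto
  moreover have "\<mu> *\<^sub>R a0 \<noteq> 0" using \<open>\<mu> < 0\<close> \<open>a0 \<noteq> 0\<close> by simp
  ultimately show ?thesis using that by blast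
qed

lemma facet_ineq_exists:
  fixes P :: "(real^'n) set"
  assumes "rational_polytope P" and "aff_dim P = int CARD('n)" and "G facet_of P"
  obtains a b where "facet_ineq P a b" "G = P \<inter> {x. a \<bullet> x = b}"
proof -
  obtain r c where r: "rational_pt r" "r \<noteq> 0" "\<And>x. x \<in> P \<Longrightarrow> r \<bullet> x \<ge> c"
    and G: "G = P \<inter> {x. r \<bullet> x = c}"
    using facet_rational_supporting_ineq[OF assms] by blast
  obtain m :: int where m: "m > 0" "lattice_pt (of_int m *\<^sub>R r)"
    using rational_pt_lattice_multiple[OF r(1)] by blast
  moreover have "of_int m *\<^sub>R r \<noteq> 0" using m(1) r(2) by simp
  ultimately obtain v t where v: "primitive v" "t > 0" "of_int m *\<^sub>R r = t *\<^sub>R v"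
    using lattice_pt_primitive_multiple by metis
  define s where "s = of_int m / t"
  have "v = (1 / t) *\<^sub>R (of_int m *\<^sub>R r)" using v(2,3) by simp
  then have "v = s *\<^sub>R r" unfolding s_def by simp
  moreover have "s > 0" using v(2) m(1) unfolding s_def by simp
  ultimately have "\<forall>x\<in>P. v \<bullet> x \<ge> s * c" "G = P \<inter> {x. v \<bullet> x = s * c}"
    using r(3) G by auto
  then have "facet_ineq P v (s * c)" "G = P \<inter> {x. v \<bullet> x = s * c}"
    unfolding facet_ineq_def using v(1) assms(3) by (auto simp: Int_def conj_commute)
  then show ?thesis using that by blast
qed

lemma facet_ineqs_imp_mem_rational_polytope:
  fixes P :: "(real^'n) set"
  assumes P: "rational_polytope P" and fd: "aff_dim P = int CARD('n)"
    and z: "\<And>a b. facet_ineq P a b \<Longrightarrow> a \<bullet> z \<ge> b"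
  shows "z \<in> P"
proof -
  obtain \<F> where \<F>: "finite \<F>" "P = affine hull P \<inter> \<Inter>\<F>"
    "\<forall>h \<in> \<F>. \<exists>a b. a \<noteq> 0 \<and> h = {x. a \<bullet> x \<le> b}"
    "\<forall>\<F>'. \<F>' \<subset> \<F> \<longrightarrow> P \<subset> affine hull P \<inter> \<Inter>\<F>'"
    using polyhedron_Int_affine_minimal polytope_imp_polyhedron rational_polytope_imp_polytope[OF P]
    by metis
  then obtain a b where ab: "\<And>h. h \<in> \<F> \<Longrightarrow> a h \<noteq> 0 \<and> h = {x. a h \<bullet> x \<le> b h}"
    by metis
  have "z \<in> h" if h: "h \<in> \<F>" for h
  proof -
    have facet: "(P \<inter> {x. a h \<bullet> x = b h}) facet_of P"
      using facet_of_polyhedron_explicit[OF \<F>(1,2) ab] \<F>(4) h by blast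
    then obtain a' b' where f: "facet_ineq P a' b'"
      and eq: "P \<inter> {x. a h \<bullet> x = b h} = P \<inter> {x. a' \<bullet> x = b'}"
      using facet_ineq_exists[OF P fd] by metis
    have "\<And>x. x \<in> P \<Longrightarrow> - a h \<bullet> x \<ge> - b h" using \<F>(2) h ab[OF h] by auto
    moreover have "\<And>x. x \<in> P \<Longrightarrow> a' \<bullet> x \<ge> b'" using f unfolding facet_ineq_def by blast
    moreover have "a' \<noteq> 0" using f by (auto simp: facet_ineq_def primitive_def)
    ultimately obtain l where l: "l > 0" "a' = l *\<^sub>R (- a h)" "b' = l * (- b h)"
      using facet_supporting_ineqs_proportional[OF fd facet, of "- a h" a' "- b h" b'] ab[OF h] eq
      by auto
    then have "l * (a h \<bullet> z) \<le> l * b h" using z[OF f] by simp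
    then have "a h \<bullet> z \<le> b h" using l(1) by simp
    then show ?thesis using ab[OF h] by blast
  qed
  moreover have "affine hull P = UNIV" using fd aff_dim_eq_full[of P] by simp
  ultimately show ?thesis using \<F>(2) by blast
qed

section \<open>Cones and their extreme rays\<close>

lemma convex_cone_hull_finite:
  fixes N :: "'a::real_vector set"
  assumes "finite N"
  shows "convex_cone hull N = {y. \<exists>c. (\<forall>a\<in>N. c a \<ge> 0) \<and> (\<Sum>a\<in>N. c a *\<^sub>R a) = y}"
    (is "_ = ?comb")
proof
  have "convex_cone ?comb"
    unfolding convex_cone_iff
  proof (intro conjI ballI allI impI)
    show "0 \<in> ?comb" by (auto intro!: exI[of _ "\<lambda>_. 0"])
  next
    fix x y assume "x \<in> ?comb" "y \<in> ?comb"
    then obtain c d where "\<forall>a\<in>N. c a \<ge> 0" "(\<Sum>a\<in>N. c a *\<^sub>R a) = x"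
      "\<forall>a\<in>N. d a \<ge> 0" "(\<Sum>a\<in>N. d a *\<^sub>R a) = y" by blast
    then show "x + y \<in> ?comb"
      by (auto simp: scaleR_add_left sum.distrib intro!: exI[of _ "\<lambda>a. c a + d a"])
  next
    fix x and t :: real assume "x \<in> ?comb" "t \<ge> 0"
    then obtain c where "\<forall>a\<in>N. c a \<ge> 0" "(\<Sum>a\<in>N. c a *\<^sub>R a) = x" by blast
    then show "t *\<^sub>R x \<in> ?comb"
      using \<open>t \<ge> 0\<close> by (auto simp: scaleR_sum_right intro!: exI[of _ "\<lambda>a. t * c a"])
  qed
  moreover have "N \<subseteq> ?comb"
  proof
    fix a assume "a \<in> N"
    then have "(\<Sum>b\<in>N. (if b = a then 1 else 0) *\<^sub>R b) = a"
      using assms by (simp add: if_distrib[of "\<lambda>c. c *\<^sub>R _"] cong: if_cong)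
    then show "a \<in> ?comb" by (auto intro!: exI[of _ "\<lambda>b. if b = a then 1 else 0"])
  qed
  ultimately show "convex_cone hull N \<subseteq> ?comb" by (rule hull_minimal[rotated])
next
  show "?comb \<subseteq> convex_cone hull N"
  proof clarify
    fix c :: "'a \<Rightarrow> real" assume c: "\<forall>a\<in>N. c a \<ge> 0"
    have "(\<Sum>a\<in>M. c a *\<^sub>R a) \<in> convex_cone hull N" if "M \<subseteq> N" for M
      using finite_subset[OF that assms] that
    proof (induction M rule: finite_induct)
      case (insert x M)
      then have "c x *\<^sub>R x \<in> convex_cone hull N"
        using c by (intro convex_cone_hull_mul hull_inc) auto
      then show ?case using insert by (simp add: convex_cone_hull_add)
    qed (simp add: convex_cone_hull_contains_0)
    then show "(\<Sum>a\<in>N. c a *\<^sub>R a) \<in> convex_cone hull N" by blast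
  qed
qed

lemma ray_eq_conic_hull: "{t *\<^sub>R v | t. t \<ge> 0} = conic hull {v}"
  unfolding conic_hull_explicit by blast

lemma convex_cone_normal_cone: "convex_cone (normal_cone P F)"
  unfolding convex_cone_iff normal_cone_def
  by (auto simp: inner_add_left intro: add_mono mult_left_mono)

lemma closed_normal_cone: "closed (normal_cone P F)"
proof -
  have "normal_cone P F = (\<Inter>y\<in>F. \<Inter>z\<in>P. {u. u \<bullet> (y - z) \<le> 0})"
    unfolding normal_cone_def by (auto simp: inner_diff_right)
  then show ?thesis
    by (simp add: closed_INT closed_halfspace_le inner_commute[of _ "_ - _"])
qed

lemma face_of_conic_summand:
  assumes F: "F face_of C" and "conic C" "conic F" and "p \<in> C" "q \<in> C" "p + q \<in> F"
  shows "p \<in> F"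
proof (cases "p = q")
  case True
  then have "p = (1/2) *\<^sub>R (p + q)" by (simp flip: scaleR_2)
  then show ?thesis using conicD[OF \<open>conic F\<close> \<open>p + q \<in> F\<close>] by (metis less_eq_real_def zero_less_divide_1_iff zero_less_numeral)
next
  case False
  have "p + q \<in> open_segment (2 *\<^sub>R p) (2 *\<^sub>R q)"
    using False unfolding in_segment(2) by (intro conjI exI[of _ "1/2"]) (auto simp: scaleR_add_right)
  moreover have "2 *\<^sub>R p \<in> C" "2 *\<^sub>R q \<in> C" using conicD[OF \<open>conic C\<close>] assms(4,5) by auto
  ultimately have "2 *\<^sub>R p \<in> F" using face_ofD[OF F] \<open>p + q \<in> F\<close> by blast
  then show ?thesis using conicD[OF \<open>conic F\<close>, of "2 *\<^sub>R p" "1/2"] by simp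
qed

lemma face_of_convex_cone_if_summand_closed:
  assumes "conic C" and "convex T" "conic T" "T \<subseteq> C"
    and summand: "\<And>p q. p \<in> C \<Longrightarrow> q \<in> C \<Longrightarrow> p + q \<in> T \<Longrightarrow> p \<in> T"
  shows "T face_of C"
  unfolding face_of_def
proof (intro conjI assms(2,4), intro ballI impI)
  fix a b x assume ab: "a \<in> C" "b \<in> C" and "x \<in> T" "x \<in> open_segment a b"
  then obtain u where u: "0 < u" "u < 1" "x = (1 - u) *\<^sub>R a + u *\<^sub>R b"
    unfolding in_segment(2) by blast
  have C: "(1 - u) *\<^sub>R a \<in> C" "u *\<^sub>R b \<in> C" using conicD[OF \<open>conic C\<close>] ab u by auto
  then have T: "(1 - u) *\<^sub>R a \<in> T" "u *\<^sub>R b \<in> T"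
    using summand[OF C] summand[OF C(2,1)] \<open>x \<in> T\<close> u(3) by (auto simp: add.commute)
  have "(1 / (1 - u)) *\<^sub>R ((1 - u) *\<^sub>R a) \<in> T"
    by (rule conicD[OF \<open>conic T\<close> T(1)]) (use u in simp)
  moreover have "(1 / u) *\<^sub>R (u *\<^sub>R b) \<in> T"
    by (rule conicD[OF \<open>conic T\<close> T(2)]) (use u in simp)
  ultimately show "a \<in> T \<and> b \<in> T" using u by simp
qed

lemma ray_face_contains_generator:
  assumes fin: "finite N" and "0 \<notin> N" and "conic C" and sub: "convex_cone hull N \<subseteq> C"
    and x: "x \<in> convex_cone hull N" "x \<noteq> 0" and face: "{t *\<^sub>R x | t. t \<ge> 0} face_of C"
  obtains a s where "a \<in> N" "s > 0" "a = s *\<^sub>R x"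
proof -
  obtain c where c: "\<forall>a\<in>N. c a \<ge> 0" "(\<Sum>a\<in>N. c a *\<^sub>R a) = x"
    using x(1) convex_cone_hull_finite[OF fin] by blast
  obtain a where a: "a \<in> N" "c a > 0"
    using c x(2) by (metis (no_types, lifting) less_eq_real_def scaleR_zero_left sum.neutral)
  define r where "r = (\<Sum>b\<in>N. (c(a := 0)) b *\<^sub>R b)"
  have "x = c a *\<^sub>R a + r"
    using fin a(1) unfolding r_def c(2)[symmetric] by (simp add: sum.remove)
  moreover have "r \<in> convex_cone hull N"
    unfolding convex_cone_hull_finite[OF fin] r_def using c(1)
    by (intro CollectI exI[of _ "c(a := 0)"]) simp
  then have "r \<in> C" using sub by blast
  moreover have "c a *\<^sub>R a \<in> C"
    using a sub conicD[OF \<open>conic C\<close>] hull_inc[of a N] by (auto intro: less_imp_le)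
  ultimately have "c a *\<^sub>R a \<in> conic hull {x}"
    by (metis face_of_conic_summand[OF face[unfolded ray_eq_conic_hull] \<open>conic C\<close> conic_conic_hull]
        hull_inc singletonI)
  then obtain t where t: "t \<ge> 0" "c a *\<^sub>R a = t *\<^sub>R x" unfolding conic_hull_explicit by blast
  have "a \<noteq> 0" using a(1) \<open>0 \<notin> N\<close> by blast
  then have "t \<noteq> 0" using t a(2) by auto
  have "a = (1 / c a) *\<^sub>R (c a *\<^sub>R a)" using a(2) by simp
  then have "a = (t / c a) *\<^sub>R x" using t(2) by simp
  moreover have "t / c a > 0" using \<open>t \<noteq> 0\<close> t(1) a(2) by simp
  ultimately show ?thesis using that a(1) by blast
qed

lemma extreme_point_slice_ray_face_of:
  fixes C :: "'a::real_inner set"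
  assumes C: "convex_cone C" and pos: "\<And>g. g \<in> C \<Longrightarrow> g \<noteq> 0 \<Longrightarrow> w \<bullet> g > 0"
    and e: "e extreme_point_of (C \<inter> {g. w \<bullet> g = 1})"
  shows "{t *\<^sub>R e | t. t \<ge> 0} face_of C"
proof -
  have eC: "e \<in> C" and we: "w \<bullet> e = 1" using e unfolding extreme_point_of_def by auto
  have "conic C" using C by (simp add: convex_cone_def)
  show ?thesis
    unfolding ray_eq_conic_hull
  proof (rule face_of_convex_cone_if_summand_closed[OF \<open>conic C\<close>])
    show "convex (conic hull {e})" by (simp add: convex_conic_hull)
    show "conic (conic hull {e})" by (rule conic_conic_hull)
    show "conic hull {e} \<subseteq> C" using eC \<open>conic C\<close> by (simp add: hull_minimal)
  next
    fix p q assume p: "p \<in> C" and q: "q \<in> C" and "p + q \<in> conic hull {e}"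
    then obtain t where t: "p + q = t *\<^sub>R e" unfolding conic_hull_explicit by blast
    show "p \<in> conic hull {e}"
    proof (cases "p = 0 \<or> q = 0")
      case True
      then show ?thesis using t \<open>p + q \<in> conic hull {e}\<close> by (auto simp: conic_hull_explicit)
    next
      case False
      \<comment> \<open>rescale p and q into the slice, where e is a proper convex combination of them\<close>
      define p' q' where "p' = (1 / (w \<bullet> p)) *\<^sub>R p" and "q' = (1 / (w \<bullet> q)) *\<^sub>R q"
      have wp: "w \<bullet> p > 0" and wq: "w \<bullet> q > 0" using pos p q False by auto
      then have slice: "p' \<in> C \<inter> {g. w \<bullet> g = 1}" "q' \<in> C \<inter> {g. w \<bullet> g = 1}"
        using p q conicD[OF \<open>conic C\<close>] unfolding p'_def q'_def by auto
      have "t = w \<bullet> p + w \<bullet> q" using t we by (metis inner_add_right inner_scaleR_right mult.right_neutral)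
      then have "t > 0" using wp wq by simp
      have "(w \<bullet> p / t) *\<^sub>R p' = (1 / t) *\<^sub>R p" "(w \<bullet> q / t) *\<^sub>R q' = (1 / t) *\<^sub>R q"
        using wp wq unfolding p'_def q'_def by simp_all
      moreover have "w \<bullet> q / t = 1 - w \<bullet> p / t" using \<open>t = _\<close> \<open>t > 0\<close> by (simp add: field_simps)
      ultimately have "(w \<bullet> p / t) *\<^sub>R p' + (1 - w \<bullet> p / t) *\<^sub>R q' = (1 / t) *\<^sub>R (p + q)"
        by (simp add: scaleR_add_right)
      then have "e = (w \<bullet> p / t) *\<^sub>R p' + (1 - w \<bullet> p / t) *\<^sub>R q'"
        using t \<open>t > 0\<close> by simp
      moreover have "0 < w \<bullet> p / t" "w \<bullet> p / t < 1" using \<open>t = _\<close> wp wq by auto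
      ultimately have "p' = q'"
        using e slice unfolding extreme_point_of_def in_segment(2)
        by (metis add.commute)
      then have "e = p'" using \<open>e = _\<close> by (simp add: scaleR_add_left[symmetric])
      moreover have "p = (w \<bullet> p) *\<^sub>R p'" using wp unfolding p'_def by simp
      ultimately have "p = (w \<bullet> p) *\<^sub>R e" by simp
      then show ?thesis using wp unfolding conic_hull_explicit by (auto intro!: exI[of _ "w \<bullet> p"])
    qed
  qed
qed

text \<open>The slice of the cone by the hyperplane w \<bullet> g = 1 is compact and convex, so by
  Krein--Milman it is the convex hull of its extreme points, each of which spans an extreme ray.\<close>

lemma pointed_cone_subset_hull_if_extreme_rays:
  fixes C :: "'a::euclidean_space set"
  assumes C: "convex_cone C" "closed C" and "\<epsilon> > 0" and bound: "\<And>g. g \<in> C \<Longrightarrow> \<epsilon> * norm g \<le> w \<bullet> g"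
    and rays: "\<And>e. e \<in> C \<Longrightarrow> e \<noteq> 0 \<Longrightarrow> {t *\<^sub>R e | t. t \<ge> 0} face_of C \<Longrightarrow> e \<in> convex_cone hull G"
  shows "C \<subseteq> convex_cone hull G"
proof
  have pos: "w \<bullet> g > 0" if "g \<in> C" "g \<noteq> 0" for g
    using that bound \<open>\<epsilon> > 0\<close> by (smt (verit, best) mult_pos_pos zero_less_norm_iff)
  define K where "K = C \<inter> {g. w \<bullet> g = 1}"
  have "K \<subseteq> cball 0 (1 / \<epsilon>)"
    using bound \<open>\<epsilon> > 0\<close> by (auto simp: K_def field_simps) (metis)
  then have "compact K" unfolding K_def compact_eq_bounded_closed
    using C(2) by (simp add: bounded_subset[OF bounded_cball] closed_Int closed_hyperplane)
  moreover have "convex K"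
    unfolding K_def using C(1) by (simp add: convex_cone_def convex_Int convex_hyperplane)
  ultimately have K_hull: "K = convex hull {e. e extreme_point_of K}" by (rule Krein_Milman_Minkowski)
  have "e \<in> convex_cone hull G" if e: "e extreme_point_of K" for e
  proof (rule rays)
    show "{t *\<^sub>R e | t. t \<ge> 0} face_of C"
      using extreme_point_slice_ray_face_of[OF C(1) pos] e unfolding K_def by blast
    show "e \<in> C" "e \<noteq> 0" using e unfolding extreme_point_of_def K_def by auto
  qed
  then have K_sub: "K \<subseteq> convex_cone hull G"
    using K_hull convex_convex_cone_hull by (metis hull_minimal mem_Collect_eq subsetI)
  fix u assume u: "u \<in> C"
  show "u \<in> convex_cone hull G"
  proof (cases "u = 0")
    case False
    then have "w \<bullet> u > 0" using pos u by blast
    then have "(1 / (w \<bullet> u)) *\<^sub>R u \<in> K"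
      unfolding K_def using convex_cone_scaleR[OF C(1) _ u] by auto
    then have "(1 / (w \<bullet> u)) *\<^sub>R u \<in> convex_cone hull G" using K_sub by blast
    then have "(w \<bullet> u) *\<^sub>R ((1 / (w \<bullet> u)) *\<^sub>R u) \<in> convex_cone hull G"
      by (rule convex_cone_hull_mul) (use \<open>w \<bullet> u > 0\<close> in simp)
    then show ?thesis using \<open>w \<bullet> u > 0\<close> by simp
  qed (simp add: convex_cone_hull_contains_0)
qed

section \<open>Normal cones of full-dimensional rational polytopes\<close>

definition tight_facet_normals :: "(real^'n) set \<Rightarrow> (real^'n) set \<Rightarrow> (real^'n) set" where
  "tight_facet_normals P F = {a. \<exists>b. facet_ineq P a b \<and> (\<forall>y\<in>F. a \<bullet> y = b)}"

lemma finite_tight_facet_normals: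
  fixes P :: "(real^'n) set"
  assumes "aff_dim P = int CARD('n)" and "polytope P"
  shows "finite (tight_facet_normals P F)"
proof (rule finite_subset)
  show "tight_facet_normals P F \<subseteq> fst ` {(a, b). facet_ineq P a b}"
    unfolding tight_facet_normals_def by force
qed (use finite_facet_ineqs[OF assms] in simp)

lemma tight_facet_normals_subset_normal_cone: "tight_facet_normals P F \<subseteq> normal_cone P F"
  unfolding tight_facet_normals_def normal_cone_def facet_ineq_def by fastforce

lemma primitive_if_tight_facet_normal: "a \<in> tight_facet_normals P F \<Longrightarrow> primitive a"
  unfolding tight_facet_normals_def facet_ineq_def by blast

lemma separate_point_from_finite_cone:
  fixes N :: "'a::euclidean_space set"
  assumes "finite N" and "g \<notin> convex_cone hull N"
  obtains w where "w \<bullet> g < 0" "\<And>a. a \<in> N \<Longrightarrow> w \<bullet> a \<ge> 0"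
proof -
  obtain w \<beta> where w: "w \<bullet> g < \<beta>" "\<forall>x\<in>convex_cone hull N. w \<bullet> x > \<beta>"
    using separating_hyperplane_closed_point[OF convex_convex_cone_hull
        closed_convex_cone_hull[OF assms(1)] assms(2)] by blast
  then have "\<beta> < 0" using convex_cone_hull_contains_0 by fastforce
  have "w \<bullet> a \<ge> 0" if "a \<in> N" for a
  proof (rule ccontr)
    assume "\<not> w \<bullet> a \<ge> 0"
    then have "(\<beta> / (w \<bullet> a)) *\<^sub>R a \<in> convex_cone hull N"
      using \<open>\<beta> < 0\<close> that by (intro convex_cone_hull_mul hull_inc) (auto simp: zero_le_divide_iff)
    then show False using w(2) \<open>\<not> w \<bullet> a \<ge> 0\<close> by fastforce
  qed
  moreover have "w \<bullet> g < 0" using w(1) \<open>\<beta> < 0\<close> by simp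
  ultimately show ?thesis using that by blast
qed

lemma small_shift_preserves_strict_ineqs:
  fixes y w :: "'a::real_inner"
  assumes "finite T"
  obtains t where "t > 0" "\<And>a b. (a, b) \<in> T \<Longrightarrow> a \<bullet> y > b \<Longrightarrow> a \<bullet> (y + t *\<^sub>R w) > b"
proof -
  have "\<forall>\<^sub>F t in at_right 0. \<forall>(a, b)\<in>T. a \<bullet> y > b \<longrightarrow> a \<bullet> (y + t *\<^sub>R w) > b"
  proof (rule eventually_ball_finite[OF assms], clarify)
    fix a b
    have "((\<lambda>t. a \<bullet> (y + t *\<^sub>R w)) \<longlongrightarrow> a \<bullet> (y + 0 *\<^sub>R w)) (at_right (0::real))"
      by (intro tendsto_intros)
    then show "\<forall>\<^sub>F t in at_right 0. a \<bullet> y > b \<longrightarrow> a \<bullet> (y + t *\<^sub>R w) > b"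
      using order_tendstoD(1) by (cases "a \<bullet> y > b") auto
  qed
  moreover have "\<forall>\<^sub>F t in at_right (0::real). t > 0" by (simp add: eventually_at_right_less)
  ultimately have "\<forall>\<^sub>F t in at_right (0::real).
      t > 0 \<and> (\<forall>(a, b)\<in>T. a \<bullet> y > b \<longrightarrow> a \<bullet> (y + t *\<^sub>R w) > b)"
    by (rule eventually_conj[rotated])
  then obtain t where "t > 0" "\<forall>(a, b)\<in>T. a \<bullet> y > b \<longrightarrow> a \<bullet> (y + t *\<^sub>R w) > b"
    using eventually_happens trivial_limit_at_right_real by blast
  then show ?thesis using that by blast
qed

text \<open>Farkas-type step: if some g in the normal cone lay outside the cone of the tight facet
  normals, a separating direction w would be weakly increasing on every facet tight at a relative
  interior point y of F, so y + t w stays in P for small t > 0 while g decreases along it.\<close>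

lemma normal_cone_subset_hull_tight_facet_normals:
  fixes P :: "(real^'n) set"
  assumes P: "rational_polytope P" and fd: "aff_dim P = int CARD('n)"
    and F: "F face_of P" "F \<noteq> {}"
  shows "normal_cone P F \<subseteq> convex_cone hull (tight_facet_normals P F)"
proof
  fix g assume g: "g \<in> normal_cone P F"
  let ?N = "tight_facet_normals P F"
  have poly: "polytope P" using P by (rule rational_polytope_imp_polytope)
  show "g \<in> convex_cone hull ?N"
  proof (rule ccontr)
    assume "g \<notin> convex_cone hull ?N"
    then obtain w where w: "w \<bullet> g < 0" "\<And>a. a \<in> ?N \<Longrightarrow> w \<bullet> a \<ge> 0"
      using separate_point_from_finite_cone finite_tight_facet_normals[OF fd poly] by blast
    obtain y where y: "y \<in> rel_interior F"
      using F face_of_imp_convex rel_interior_eq_empty by blast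
    have "F \<subseteq> P" using F(1) face_of_imp_subset by blast
    then have "y \<in> F" "y \<in> P" using y rel_interior_subset by auto
    have tight: "a \<bullet> w \<ge> 0" if ab: "facet_ineq P a b" and "a \<bullet> y = b" for a b
    proof -
      have "(P \<inter> {x. a \<bullet> x = b}) face_of P"
        using ab unfolding facet_ineq_def
        by (intro face_of_Int_supporting_hyperplane_ge) (auto simp: polytope_imp_convex[OF poly])
      moreover have "(P \<inter> {x. a \<bullet> x = b}) \<inter> rel_interior F \<noteq> {}" using y \<open>y \<in> P\<close> that(2) by blast
      ultimately have "F \<subseteq> P \<inter> {x. a \<bullet> x = b}" using subset_of_face_of \<open>F \<subseteq> P\<close> by blast
      then have "a \<in> ?N" unfolding tight_facet_normals_def using ab by blast
      then show ?thesis using w(2) by (simp add: inner_commute)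
    qed
    obtain t where t: "t > 0"
      "\<And>a b. (a, b) \<in> {(a, b). facet_ineq P a b} \<Longrightarrow> a \<bullet> y > b \<Longrightarrow> a \<bullet> (y + t *\<^sub>R w) > b"
      using small_shift_preserves_strict_ineqs[OF finite_facet_ineqs[OF fd poly]] by blast
    have "a \<bullet> (y + t *\<^sub>R w) \<ge> b" if ab: "facet_ineq P a b" for a b
    proof (cases "a \<bullet> y = b")
      case True
      then show ?thesis using tight[OF ab True] t(1) by (simp add: inner_add_right)
    next
      case False
      then have "a \<bullet> y > b" using ab \<open>y \<in> P\<close> unfolding facet_ineq_def by force
      then show ?thesis using t(2) ab by fastforce
    qed
    then have "y + t *\<^sub>R w \<in> P" by (rule facet_ineqs_imp_mem_rational_polytope[OF P fd])
    then have "g \<bullet> y \<le> g \<bullet> (y + t *\<^sub>R w)" using g \<open>y \<in> F\<close> unfolding normal_cone_def by blast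
    then have "0 \<le> t * (g \<bullet> w)" by (simp add: inner_add_right)
    then show False using w(1) t(1) by (simp add: inner_commute zero_le_mult_iff)
  qed
qed

lemma normal_cone_uniformly_positive:
  fixes P :: "(real^'n) set"
  assumes "interior P \<noteq> {}" and "y0 \<in> F"
  obtains w \<epsilon> where "\<epsilon> > 0" "\<And>g. g \<in> normal_cone P F \<Longrightarrow> \<epsilon> * norm g \<le> w \<bullet> g"
proof -
  obtain p \<epsilon> where "\<epsilon> > 0" and ball: "cball p \<epsilon> \<subseteq> P"
    using assms(1) mem_interior_cball by blast
  have "\<epsilon> * norm g \<le> (p - y0) \<bullet> g" if g: "g \<in> normal_cone P F" for g
  proof (cases "g = 0")
    case False
    \<comment> \<open>test g against the point of the ball farthest in direction -g\<close>
    define z where "z = p - (\<epsilon> / norm g) *\<^sub>R g"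
    have "z \<in> P" using ball \<open>\<epsilon> > 0\<close> unfolding z_def by (auto simp: dist_norm)
    then have "g \<bullet> y0 \<le> g \<bullet> z" using g assms(2) unfolding normal_cone_def by blast
    also have "g \<bullet> z = g \<bullet> p - \<epsilon> * norm g"
      using False unfolding z_def by (simp add: inner_diff_right power2_norm_eq_inner[symmetric] power2_eq_square)
    finally show ?thesis by (simp add: inner_diff_right inner_commute)
  qed simp
  then show ?thesis using that \<open>\<epsilon> > 0\<close> by blast
qed

lemma ray_gens_normal_cone_subset:
  fixes P :: "(real^'n) set"
  assumes "rational_polytope P" and fd: "aff_dim P = int CARD('n)"
    and F: "F face_of P" "F \<noteq> {}"
  shows "ray_gens (normal_cone P F) \<subseteq> tight_facet_normals P F"
proof
  fix v assume "v \<in> ray_gens (normal_cone P F)"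
  then have v: "primitive v" "{t *\<^sub>R v | t. t \<ge> 0} face_of normal_cone P F"
    unfolding ray_gens_def by auto
  have "v \<in> {t *\<^sub>R v | t. t \<ge> 0}" by (auto intro!: exI[of _ 1])
  then have "v \<in> normal_cone P F" using face_of_imp_subset[OF v(2)] by blast
  then have "v \<in> convex_cone hull tight_facet_normals P F"
    using normal_cone_subset_hull_tight_facet_normals[OF assms] by blast
  moreover have "v \<noteq> 0" using v(1) primitive_def by blast
  moreover have "finite (tight_facet_normals P F)"
    using finite_tight_facet_normals[OF fd rational_polytope_imp_polytope] assms(1) by blast
  moreover have "0 \<notin> tight_facet_normals P F"
    using primitive_if_tight_facet_normal primitive_def by blast
  moreover have "convex_cone hull tight_facet_normals P F \<subseteq> normal_cone P F"
    using convex_cone_normal_cone tight_facet_normals_subset_normal_cone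
    by (metis hull_minimal)
  ultimately obtain a s where a: "a \<in> tight_facet_normals P F" "s > 0" "a = s *\<^sub>R v"
    using ray_face_contains_generator[OF _ _ _ _ _ _ v(2)] convex_cone_normal_cone
    unfolding convex_cone_def by blast
  then have "s = 1" using primitive_positive_multiple v(1) primitive_if_tight_facet_normal by blast
  then show "v \<in> tight_facet_normals P F" using a by simp
qed

lemma interior_nonempty_if_full_dim:
  fixes P :: "(real^'n) set"
  assumes "convex P" "P \<noteq> {}" "aff_dim P = int CARD('n)"
  shows "interior P \<noteq> {}"
proof -
  have "interior P = rel_interior P" using assms(3) interior_rel_interior_gen[of P] by simp
  then show ?thesis using assms(1,2) by (metis rel_interior_eq_empty)
qed

lemma normal_cone_subset_hull_ray_gens:
  fixes P :: "(real^'n) set"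
  assumes P: "rational_polytope P" and fd: "aff_dim P = int CARD('n)"
    and F: "F face_of P" "F \<noteq> {}"
  shows "normal_cone P F \<subseteq> convex_cone hull ray_gens (normal_cone P F)"
proof -
  define \<sigma> where "\<sigma> = normal_cone P F"
  define N where "N = tight_facet_normals P F"
  have "finite N" unfolding N_def
    using finite_tight_facet_normals[OF fd rational_polytope_imp_polytope[OF P]] .
  have "convex_cone \<sigma>" unfolding \<sigma>_def by (rule convex_cone_normal_cone)
  have "convex_cone hull N \<subseteq> \<sigma>" unfolding \<sigma>_def N_def
    using convex_cone_normal_cone tight_facet_normals_subset_normal_cone by (metis hull_minimal)
  have "0 \<notin> N" unfolding N_def using primitive_if_tight_facet_normal primitive_def by blast
  obtain y0 where "y0 \<in> F" using F(2) by blast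
  moreover have "interior P \<noteq> {}"
    using interior_nonempty_if_full_dim polytope_imp_convex rational_polytope_imp_polytope[OF P]
      F face_of_imp_subset fd by blast
  ultimately obtain w \<epsilon> where "\<epsilon> > 0" and bound: "\<And>g. g \<in> \<sigma> \<Longrightarrow> \<epsilon> * norm g \<le> w \<bullet> g"
    using normal_cone_uniformly_positive unfolding \<sigma>_def by metis
  have "\<sigma> \<subseteq> convex_cone hull ray_gens \<sigma>"
  proof (rule pointed_cone_subset_hull_if_extreme_rays[OF \<open>convex_cone \<sigma>\<close> _ \<open>\<epsilon> > 0\<close> bound])
    show "closed \<sigma>" unfolding \<sigma>_def by (rule closed_normal_cone)
    fix e assume e: "e \<in> \<sigma>" "e \<noteq> 0" and ray: "{t *\<^sub>R e | t. t \<ge> 0} face_of \<sigma>"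
    have "e \<in> convex_cone hull N"
      using e normal_cone_subset_hull_tight_facet_normals[OF assms] unfolding \<sigma>_def N_def by auto
    then obtain a s where a: "a \<in> N" "s > 0" "a = s *\<^sub>R e"
      using ray_face_contains_generator[OF \<open>finite N\<close> \<open>0 \<notin> N\<close> _ \<open>convex_cone hull N \<subseteq> \<sigma>\<close> _ e(2) ray]
        \<open>convex_cone \<sigma>\<close> unfolding convex_cone_def by blast
    then have "{t *\<^sub>R a | t. t \<ge> 0} = {t *\<^sub>R e | t. t \<ge> 0}"
      unfolding ray_eq_conic_hull using conic_hull_image_scale[of "{e}" "\<lambda>_. s"] by simp
    then have "a \<in> ray_gens \<sigma>"
      using ray a(1) primitive_if_tight_facet_normal unfolding ray_gens_def N_def by auto
    moreover have "e = (1 / s) *\<^sub>R a" using a(2,3) by simp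
    ultimately show "e \<in> convex_cone hull ray_gens \<sigma>" using a(2) by (simp add: convex_cone_hull_mul hull_inc)
  qed
  then show ?thesis unfolding \<sigma>_def .
qed

section \<open>Lattice distance\<close>

lemma finite_facet_slacks:
  fixes R :: "(real^'n) set"
  assumes "aff_dim R = int CARD('n)" "polytope R"
  shows "finite {a \<bullet> x - b | a b. facet_ineq R a b}"
proof -
  have "{a \<bullet> x - b | a b. facet_ineq R a b} = (\<lambda>(a, b). a \<bullet> x - b) ` {(a, b). facet_ineq R a b}"
    by auto
  then show ?thesis using finite_facet_ineqs[OF assms] by simp
qed

lemma lattice_dist_le:
  fixes R :: "(real^'n) set"
  assumes "aff_dim R = int CARD('n)" "polytope R" and "facet_ineq R a b"
  shows "lattice_dist R x \<le> a \<bullet> x - b"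
  unfolding lattice_dist_def using finite_facet_slacks[OF assms(1,2)] assms(3) by (auto intro: Min_le)

lemma facet_ineq_exists_full_dim:
  fixes R :: "(real^'n) set"
  assumes R: "rational_polytope R" and fd: "aff_dim R = int CARD('n)"
  obtains a b where "facet_ineq R a b"
proof -
  have "polytope R" using R by (rule rational_polytope_imp_polytope)
  have "R \<noteq> {}" using fd by auto
  then obtain v where "v extreme_point_of R"
    using extreme_point_exists_convex polytope_imp_compact polytope_imp_convex \<open>polytope R\<close> by blast
  then have "{v} face_of R" by (simp add: face_of_singleton)
  moreover have "{v} \<noteq> R"
  proof
    assume "{v} = R"
    then have "aff_dim R = 0" by auto
    then show False using fd by simp
  qed
  ultimately obtain G where "G facet_of R"
    using face_of_polyhedron_subset_facet polytope_imp_polyhedron[OF \<open>polytope R\<close>] by blast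
  then show ?thesis using facet_ineq_exists[OF R fd] that by blast
qed

lemma lattice_dist_attained:
  fixes R :: "(real^'n) set"
  assumes R: "rational_polytope R" and fd: "aff_dim R = int CARD('n)"
  obtains a b where "facet_ineq R a b" "lattice_dist R x = a \<bullet> x - b"
proof -
  let ?S = "{a \<bullet> x - b | a b. facet_ineq R a b}"
  have "finite ?S" using finite_facet_slacks[OF fd rational_polytope_imp_polytope[OF R]] .
  moreover obtain a b where "facet_ineq R a b" using facet_ineq_exists_full_dim[OF R fd] .
  then have "?S \<noteq> {}" by blast
  ultimately have "Min ?S \<in> ?S" by (rule Min_in)
  then obtain a b where "facet_ineq R a b" "Min ?S = a \<bullet> x - b" by blast
  moreover have "lattice_dist R x = Min ?S" unfolding lattice_dist_def ..
  ultimately show ?thesis using that by simp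
qed

lemma lattice_dist_nonneg:
  fixes R :: "(real^'n) set"
  assumes "rational_polytope R" "aff_dim R = int CARD('n)" and "x \<in> R"
  shows "lattice_dist R x \<ge> 0"
proof -
  obtain a b where "facet_ineq R a b" "lattice_dist R x = a \<bullet> x - b"
    using lattice_dist_attained[OF assms(1,2)] .
  then show ?thesis using \<open>x \<in> R\<close> unfolding facet_ineq_def by simp
qed

lemma sum_coeffs_mul_lattice_dist_le:
  fixes P :: "(real^'n) set"
  assumes "aff_dim P = int CARD('n)" "polytope P"
    and facets: "\<And>v. v \<in> V \<Longrightarrow> facet_ineq P v (v \<bullet> y0)"
    and c: "\<And>v. v \<in> V \<Longrightarrow> c v \<ge> 0" and u: "(\<Sum>v\<in>V. c v *\<^sub>R v) = u"
  shows "(\<Sum>v\<in>V. c v) * lattice_dist P x \<le> u \<bullet> x - u \<bullet> y0"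
proof -
  have "(\<Sum>v\<in>V. c v) * lattice_dist P x = (\<Sum>v\<in>V. c v * lattice_dist P x)"
    by (rule sum_distrib_right)
  also have "\<dots> \<le> (\<Sum>v\<in>V. c v * (v \<bullet> x - v \<bullet> y0))"
    using lattice_dist_le[OF assms(1,2) facets] c by (intro sum_mono mult_left_mono) auto
  also have "\<dots> = u \<bullet> x - u \<bullet> y0"
    unfolding u[symmetric] inner_sum_left by (simp add: right_diff_distrib sum_subtractf)
  finally show ?thesis .
qed

lemma height_normal_cone_mul_lattice_dist_le:
  fixes P :: "(real^'n) set"
  assumes P: "rational_polytope P" and fd: "aff_dim P = int CARD('n)"
    and F: "F face_of P" "F \<noteq> {}" "y0 \<in> F" and u: "u \<in> normal_cone P F"
    and d: "lattice_dist P x > 0"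
  shows "height (normal_cone P F) u * lattice_dist P x \<le> u \<bullet> x - u \<bullet> y0"
proof -
  define \<sigma> where "\<sigma> = normal_cone P F"
  have "polytope P" using P by (rule rational_polytope_imp_polytope)
  have RG: "ray_gens \<sigma> \<subseteq> tight_facet_normals P F"
    unfolding \<sigma>_def by (rule ray_gens_normal_cone_subset[OF P fd F(1,2)])
  then have "finite (ray_gens \<sigma>)"
    using finite_tight_facet_normals[OF fd \<open>polytope P\<close>] by (rule finite_subset)
  moreover have "u \<in> convex_cone hull ray_gens \<sigma>"
    using normal_cone_subset_hull_ray_gens[OF P fd F(1,2)] u unfolding \<sigma>_def by blast
  ultimately obtain c where "\<forall>v\<in>ray_gens \<sigma>. c v \<ge> 0" "(\<Sum>v\<in>ray_gens \<sigma>. c v *\<^sub>R v) = u"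
    using convex_cone_hull_finite by blast
  then have reps: "{(\<Sum>v\<in>ray_gens \<sigma>. c v) | c. (\<forall>v\<in>ray_gens \<sigma>. c v \<ge> 0) \<and>
      (\<Sum>v\<in>ray_gens \<sigma>. c v *\<^sub>R v) = u} \<noteq> {}" by blast
  have facets: "facet_ineq P v (v \<bullet> y0)" if v: "v \<in> ray_gens \<sigma>" for v
  proof -
    obtain b where "facet_ineq P v b" "\<forall>y\<in>F. v \<bullet> y = b"
      using RG v unfolding tight_facet_normals_def by blast
    then show ?thesis using F(3) by simp
  qed
  have "h \<le> (u \<bullet> x - u \<bullet> y0) / lattice_dist P x"
    if h: "h \<in> {(\<Sum>v\<in>ray_gens \<sigma>. c v) | c. (\<forall>v\<in>ray_gens \<sigma>. c v \<ge> 0) \<and>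
      (\<Sum>v\<in>ray_gens \<sigma>. c v *\<^sub>R v) = u}" for h
  proof -
    obtain c where h_eq: "h = (\<Sum>v\<in>ray_gens \<sigma>. c v)" and c: "\<forall>v\<in>ray_gens \<sigma>. c v \<ge> 0"
      and cu: "(\<Sum>v\<in>ray_gens \<sigma>. c v *\<^sub>R v) = u"
      using h by blast
    have "h * lattice_dist P x \<le> u \<bullet> x - u \<bullet> y0"
      unfolding h_eq using c by (intro sum_coeffs_mul_lattice_dist_le[OF fd \<open>polytope P\<close> facets _ cu]) auto
    then show ?thesis using d by (simp add: pos_le_divide_eq)
  qed
  then have "height \<sigma> u \<le> (u \<bullet> x - u \<bullet> y0) / lattice_dist P x"
    unfolding height_def by (rule cSup_least[OF reps])
  then show ?thesis using d unfolding \<sigma>_def by (simp add: pos_le_divide_eq)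
qed

lemma alpha_canonical_supporting_ineq_bound:
  fixes P :: "(real^'n) set"
  assumes P: "rational_polytope P" and fd: "aff_dim P = int CARD('n)"
    and canonical: "alpha_canonical_polytope \<alpha> P"
    and u: "lattice_pt u" "u \<noteq> 0" and valid: "\<And>z. z \<in> P \<Longrightarrow> u \<bullet> z \<ge> b"
    and y0: "y0 \<in> P" "u \<bullet> y0 = b" and x: "x \<in> P"
  shows "\<alpha> * lattice_dist P x \<le> u \<bullet> x - b"
proof (cases "lattice_dist P x > 0")
  case True
  define F where "F = P \<inter> {z. u \<bullet> z = b}"
  have F: "F face_of P" "F \<noteq> {}" "y0 \<in> F"
    unfolding F_def using valid y0 polytope_imp_convex[OF rational_polytope_imp_polytope[OF P]]
    by (auto intro: face_of_Int_supporting_hyperplane_ge)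
  have "u \<in> normal_cone P F" unfolding normal_cone_def F_def using valid by auto
  moreover have "normal_cone P F \<in> normal_fan P" unfolding normal_fan_def using F by blast
  ultimately have "\<alpha> \<le> height (normal_cone P F) u"
    using canonical u unfolding alpha_canonical_polytope_def alpha_canonical_cone_def by blast
  then have "\<alpha> * lattice_dist P x \<le> height (normal_cone P F) u * lattice_dist P x"
    using True by (simp add: mult_right_mono)
  also have "\<dots> \<le> u \<bullet> x - b"
    using height_normal_cone_mul_lattice_dist_le[OF P fd F \<open>u \<in> normal_cone P F\<close> True] y0(2)
    by simp
  finally show ?thesis .
next
  case False
  then have "lattice_dist P x = 0" using lattice_dist_nonneg[OF P fd x] by simp
  then show ?thesis using valid[OF x] by simp
qed

lemma rational_polytope_linear_image:
  fixes f :: "real^'n \<Rightarrow> real^'k"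
  assumes "rational_polytope P" "linear f" "\<And>i. lattice_pt (f (axis i 1))"
  shows "rational_polytope (f ` P)"
proof -
  obtain S where "finite S" "\<And>x. x \<in> S \<Longrightarrow> rational_pt x" "P = convex hull S"
    using assms(1) unfolding rational_polytope_def by blast
  moreover have "f ` P = convex hull (f ` S)"
    using \<open>P = convex hull S\<close> convex_hull_linear_image[OF assms(2)] by simp
  ultimately show ?thesis
    unfolding rational_polytope_def using rational_pt_linear_image[OF assms(2,3)] by blast
qed

lemma aff_dim_surjective_linear_image:
  fixes f :: "real^'n \<Rightarrow> real^'k"
  assumes "linear f" "surj f" and "interior P \<noteq> {}"
  shows "aff_dim (f ` P) = int CARD('k)"
proof -
  have "f ` interior P \<subseteq> interior (f ` P)"
    using open_surjective_linear_image[OF open_interior assms(1,2)] interior_subset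
    by (metis image_mono interior_maximal)
  then have "interior (f ` P) \<noteq> {}" using assms(3) by blast
  then show ?thesis using aff_dim_nonempty_interior[of "f ` P"] by simp
qed

lemma adjoint_facet_normal_supports:
  fixes \<pi> :: "real^'n \<Rightarrow> real^'k"
  assumes "linear \<pi>" "surj \<pi>" and lattice: "\<And>i. lattice_pt (\<pi> (axis i 1))"
    and ab: "facet_ineq (\<pi> ` P) a b"
  shows "lattice_pt (adjoint \<pi> a)" "adjoint \<pi> a \<noteq> 0" "\<And>z. z \<in> P \<Longrightarrow> adjoint \<pi> a \<bullet> z \<ge> b"
    "\<exists>y0\<in>P. adjoint \<pi> a \<bullet> y0 = b"
proof -
  have u: "adjoint \<pi> a \<bullet> z = a \<bullet> \<pi> z" for z
    using adjoint_works[OF assms(1)] by (simp add: inner_commute)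
  have "lattice_pt a" "a \<noteq> 0" using ab unfolding facet_ineq_def primitive_def by auto
  then show "lattice_pt (adjoint \<pi> a)" by (intro lattice_pt_adjoint[OF assms(1) lattice])
  obtain z where "\<pi> z = a" using assms(2) by (metis surjD)
  then show "adjoint \<pi> a \<noteq> 0" using u[of z] \<open>a \<noteq> 0\<close> by auto
  show "adjoint \<pi> a \<bullet> z \<ge> b" if "z \<in> P" for z using ab u that unfolding facet_ineq_def by simp
  have "{y \<in> \<pi> ` P. a \<bullet> y = b} \<noteq> {}" using ab unfolding facet_ineq_def facet_of_def by blast
  then show "\<exists>y0\<in>P. adjoint \<pi> a \<bullet> y0 = b" using u by auto
qed

theorem lemma2p5:
  fixes P :: "(real^'n) set" and \<pi> :: "real^'n \<Rightarrow> real^'k" and \<alpha> :: real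
  assumes "rational_polytope P" and "full_dim P"
    and "linear \<pi>" and "surj \<pi>"
    and "\<pi> ` {x. lattice_pt x} = {y. lattice_pt y}"
    and "\<alpha> > 0" and "alpha_canonical_polytope \<alpha> P"
  shows "\<forall>x\<in>P. \<alpha> * lattice_dist P x \<le> lattice_dist (\<pi> ` P) (\<pi> x)"
proof
  fix x assume "x \<in> P"
  have fd: "aff_dim P = int CARD('n)" using assms(2) unfolding full_dim_def .
  have lattice: "lattice_pt (\<pi> (axis i 1))" for i using assms(5) lattice_pt_axis by blast
  have "rational_polytope (\<pi> ` P)"
    by (rule rational_polytope_linear_image[OF assms(1,3) lattice])
  moreover have "aff_dim (\<pi> ` P) = int CARD('k)"
    using interior_nonempty_if_full_dim[OF _ _ fd] \<open>x \<in> P\<close>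
      polytope_imp_convex[OF rational_polytope_imp_polytope[OF assms(1)]]
    by (intro aff_dim_surjective_linear_image[OF assms(3,4)]) blast
  ultimately obtain a b where ab: "facet_ineq (\<pi> ` P) a b"
    and dist: "lattice_dist (\<pi> ` P) (\<pi> x) = a \<bullet> \<pi> x - b"
    using lattice_dist_attained by blast
  note u = adjoint_facet_normal_supports[OF assms(3,4) lattice ab]
  obtain y0 where "y0 \<in> P" "adjoint \<pi> a \<bullet> y0 = b" using u(4) by blast
  then have "\<alpha> * lattice_dist P x \<le> adjoint \<pi> a \<bullet> x - b"
    using alpha_canonical_supporting_ineq_bound[OF assms(1) fd assms(7) u(1-3)] \<open>x \<in> P\<close> by blast
  then show "\<alpha> * lattice_dist P x \<le> lattice_dist (\<pi> ` P) (\<pi> x)"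
    using dist adjoint_works[OF assms(3)] by (simp add: inner_commute)
qed

end
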